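(* Let $G$ be a finitely generated group hyperbolic relative to a finite collection $\mathcal P$, $S$ a finite generating set, and $(\epsilon,R,D)$ thin-triangle constants. Let $\mu$ be a positive integer and $U\subset V\cup W$ a finite subset with $|u,u'|_S\le\mu$ for all $u,u'\in U$. Then for every integer $r\ge\mu$, the $r$-hull $U_r$ is $(\mu+2D)$-convex with respect to every $b\in U$.
   Context: $\Gamma$ is the Cayley graph of $G$ w.r.t. $S$, $V=G$, $W$ the set of cosets $gP_\lambda$; relative hyperbolicity means the coned-off Cayley graph (vertex set $V\cup W$, edges of $\Gamma$ plus edges $(v,w)$ for $v\in w$) is fine and $\delta$-hyperbolic. $|\cdot,\cdot|_S$ is extended to $V\cup W$ via distances in $\Gamma$ between corresponding elements/cosets. For a geodesic edge-path $p=(p_j)_{j=0}^\ell$ in $\Gamma$, $p_i$ is $(\epsilon,R)$-deep in $w\in W$ if $R\le i\le\ell-R$ and $|p_j,w|_S\le\epsilon$ for all $|j-i|\le R$. A geodesic from $a$ to $b$ ($a,b\in V\cup W$) is a geodesic in $\Gamma$ of length $|a,b|_S$ starting at $a$ (if $a\in V$) or in $a$ (if $a\in W$), ending analogously at $b$; for $i>\ell$, $p_i:=p_\ell$. Positive integers $(\epsilon,R,D)$ are thin-triangle constants if: $D\ge\epsilon$; no vertex of a geodesic in $\Gamma$ is $(\epsilon,R)$-deep in two distinct cosets; and for all $a,b,c\in V\cup W$ with $a\ne b$, geodesics $p^{ab},p^{bc},p^{ac}$, $\ell=|a,b|_S$, $0\le i\le\ell$, with $z=w$ if $p^{ab}_i$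 is $(\epsilon,R)$-deep in $w$ and $z=p^{ab}_i$ otherwise, we have $|z,p^{ac}_i|_S\le D$ or $|z,p^{bc}_{\ell-i}|_S\le D$. The $r$-hull $U_r$ of finite $U$ is the union of all $v\in V$ with $|v,u|_S\le r$ for every $u\in U$ and all $w\in W$ with $|w,u|_S\le r+\epsilon$ for every $u\in U$. A subset $U'\subset V\cup W$ is $\nu$-convex with respect to $u\in U'$ if for every $u'\in U'$, every geodesic $(p_j)_{j=0}^\ell$ from $u$ to $u'$ in $\Gamma$ and every $j\le\ell-\nu$: $p_j\in U'$, and every $w\in W$ with $|w,p_j|_S\le\epsilon$ lies in $U'$. *)

theory Defs
  imports "HOL-Algebra.Algebra"
begin

definition is_path :: "('v \<Rightarrow> 'v \<Rightarrow> bool) \<Rightarrow> (nat \<Rightarrow> 'v) \<Rightarrow> nat \<Rightarrow> bool" where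
  "is_path E p l \<longleftrightarrow> (\<forall>j<l. E (p j) (p (Suc j)))"

text \<open>Graph (path) distance; the graphs considered are connected.\<close>
definition gdist :: "('v \<Rightarrow> 'v \<Rightarrow> bool) \<Rightarrow> 'v \<Rightarrow> 'v \<Rightarrow> nat" where
  "gdist E x y = Inf {n. \<exists>p. p 0 = x \<and> p n = y \<and> is_path E p n}"

definition is_geodesic :: "('v \<Rightarrow> 'v \<Rightarrow> bool) \<Rightarrow> (nat \<Rightarrow> 'v) \<Rightarrow> nat \<Rightarrow> bool" where
  "is_geodesic E p l \<longleftrightarrow> is_path E p l \<and> l = gdist E (p 0) (p l)"

definition is_circuit :: "('v \<Rightarrow> 'v \<Rightarrow> bool) \<Rightarrow> 'v list \<Rightarrow> bool" where
  "is_circuit E c \<longleftrightarrow> length c \<ge> 3 \<and> distinct c \<and>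
     (\<forall>i<length c. E (c ! i) (c ! ((i + 1) mod length c)))"

definition circuit_has_edge :: "'v list \<Rightarrow> 'v \<Rightarrow> 'v \<Rightarrow> bool" where
  "circuit_has_edge c a b \<longleftrightarrow>
     (\<exists>i<length c. {c ! i, c ! ((i + 1) mod length c)} = {a, b})"

definition fine_graph :: "('v \<Rightarrow> 'v \<Rightarrow> bool) \<Rightarrow> bool" where
  "fine_graph E \<longleftrightarrow> (\<forall>a b n. E a b \<longrightarrow>
     finite {c. is_circuit E c \<and> length c = n \<and> circuit_has_edge c a b})"

definition hyperbolic_graph :: "('v \<Rightarrow> 'v \<Rightarrow> bool) \<Rightarrow> real \<Rightarrow> bool" where
  "hyperbolic_graph E \<delta> \<longleftrightarrow> (\<forall>p1 l1 p2 l2 p3 l3.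
     is_geodesic E p1 l1 \<and> is_geodesic E p2 l2 \<and> is_geodesic E p3 l3 \<and>
     p2 0 = p1 l1 \<and> p3 0 = p2 l2 \<and> p1 0 = p3 l3 \<longrightarrow>
     (\<forall>i\<le>l1. (\<exists>j\<le>l2. real (gdist E (p1 i) (p2 j)) \<le> \<delta>) \<or>
              (\<exists>j\<le>l3. real (gdist E (p1 i) (p3 j)) \<le> \<delta>)))"

definition cay_adj :: "('a, 'b) monoid_scheme \<Rightarrow> 'a set \<Rightarrow> 'a \<Rightarrow> 'a \<Rightarrow> bool" where
  "cay_adj G S g h \<longleftrightarrow> g \<in> carrier G \<and> h \<in> carrier G \<and>
     (\<exists>s\<in>S. h = g \<otimes>\<^bsub>G\<^esub> s \<or> g = h \<otimes>\<^bsub>G\<^esub> s)"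

definition cosets :: "('a, 'b) monoid_scheme \<Rightarrow> 'a set set \<Rightarrow> 'a set set" where
  "cosets G P = {l_coset G g H | g H. g \<in> carrier G \<and> H \<in> P}"

text \<open>V \<union> W, realised as a disjoint sum.\<close>
definition VW :: "('a, 'b) monoid_scheme \<Rightarrow> 'a set set \<Rightarrow> ('a + 'a set) set" where
  "VW G P = Inl ` carrier G \<union> Inr ` cosets G P"

definition cone_adj :: "('a, 'b) monoid_scheme \<Rightarrow> 'a set set \<Rightarrow> 'a set
     \<Rightarrow> ('a + 'a set) \<Rightarrow> ('a + 'a set) \<Rightarrow> bool" where
  "cone_adj G P S x y = (case (x, y) of
      (Inl g, Inl h) \<Rightarrow> cay_adj G S g h
    | (Inl v, Inr w) \<Rightarrow> v \<in> carrier G \<and> w \<in> cosets G P \<and> v \<in> w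
    | (Inr w, Inl v) \<Rightarrow> v \<in> carrier G \<and> w \<in> cosets G P \<and> v \<in> w
    | (Inr _, Inr _) \<Rightarrow> False)"

definition rel_hyperbolic :: "('a, 'b) monoid_scheme \<Rightarrow> 'a set set \<Rightarrow> 'a set \<Rightarrow> bool" where
  "rel_hyperbolic G P S \<longleftrightarrow> finite P \<and> (\<forall>H\<in>P. subgroup H G) \<and>
     fine_graph (cone_adj G P S) \<and> (\<exists>\<delta>\<ge>0. hyperbolic_graph (cone_adj G P S) \<delta>)"

fun toset :: "('a + 'a set) \<Rightarrow> 'a set" where
  "toset (Inl v) = {v}"
| "toset (Inr w) = w"

definition dS :: "('a, 'b) monoid_scheme \<Rightarrow> 'a set \<Rightarrow> ('a + 'a set) \<Rightarrow> ('a + 'a set) \<Rightarrow> nat" where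
  "dS G S x y = Inf {gdist (cay_adj G S) a b | a b. a \<in> toset x \<and> b \<in> toset y}"

definition cay_geodesic :: "('a, 'b) monoid_scheme \<Rightarrow> 'a set \<Rightarrow> (nat \<Rightarrow> 'a) \<Rightarrow> nat \<Rightarrow> bool" where
  "cay_geodesic G S p l \<longleftrightarrow> p 0 \<in> carrier G \<and> is_geodesic (cay_adj G S) p l"

definition geod_from_to :: "('a, 'b) monoid_scheme \<Rightarrow> 'a set \<Rightarrow> ('a + 'a set) \<Rightarrow> ('a + 'a set)
     \<Rightarrow> (nat \<Rightarrow> 'a) \<Rightarrow> bool" where
  "geod_from_to G S a b p \<longleftrightarrow> p 0 \<in> toset a \<and> p (dS G S a b) \<in> toset b \<and>
     is_path (cay_adj G S) p (dS G S a b)"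

definition pt :: "(nat \<Rightarrow> 'a) \<Rightarrow> nat \<Rightarrow> nat \<Rightarrow> 'a" where
  "pt p l i = p (min i l)"

definition deep :: "('a, 'b) monoid_scheme \<Rightarrow> 'a set \<Rightarrow> nat \<Rightarrow> nat \<Rightarrow> (nat \<Rightarrow> 'a) \<Rightarrow> nat
     \<Rightarrow> nat \<Rightarrow> 'a set \<Rightarrow> bool" where
  "deep G S \<epsilon> R p l i w \<longleftrightarrow> R \<le> i \<and> i + R \<le> l \<and>
     (\<forall>j. i \<le> j + R \<and> j \<le> i + R \<longrightarrow> dS G S (Inl (p j)) (Inr w) \<le> \<epsilon>)"

definition thin_triangle_constants :: "('a, 'b) monoid_scheme \<Rightarrow> 'a set set \<Rightarrow> 'a set
     \<Rightarrow> nat \<Rightarrow> nat \<Rightarrow> nat \<Rightarrow> bool" where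
  "thin_triangle_constants G P S \<epsilon> R D \<longleftrightarrow>
     0 < \<epsilon> \<and> 0 < R \<and> 0 < D \<and> \<epsilon> \<le> D \<and>
     (\<forall>p l i w w'. cay_geodesic G S p l \<and> i \<le> l \<and> w \<in> cosets G P \<and> w' \<in> cosets G P \<and>
        deep G S \<epsilon> R p l i w \<and> deep G S \<epsilon> R p l i w' \<longrightarrow> w = w') \<and>
     (\<forall>a\<in>VW G P. \<forall>b\<in>VW G P. \<forall>c\<in>VW G P. \<forall>pab pbc pac. a \<noteq> b \<and>
        geod_from_to G S a b pab \<and> geod_from_to G S b c pbc \<and> geod_from_to G S a c pac \<longrightarrow>
        (\<forall>i\<le>dS G S a b.
          (\<forall>z. ((\<exists>w\<in>cosets G P. deep G S \<epsilon> R pab (dS G S a b) i w \<and> z = Inr w) \<or>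
                ((\<nexists>w. w \<in> cosets G P \<and> deep G S \<epsilon> R pab (dS G S a b) i w) \<and> z = Inl (pab i)))
             \<longrightarrow> dS G S z (Inl (pt pac (dS G S a c) i)) \<le> D \<or>
                 dS G S z (Inl (pt pbc (dS G S b c) (dS G S a b - i))) \<le> D)))"

definition r_hull :: "('a, 'b) monoid_scheme \<Rightarrow> 'a set set \<Rightarrow> 'a set \<Rightarrow> nat
     \<Rightarrow> ('a + 'a set) set \<Rightarrow> nat \<Rightarrow> ('a + 'a set) set" where
  "r_hull G P S \<epsilon> U r =
     {Inl v | v. v \<in> carrier G \<and> (\<forall>u\<in>U. dS G S (Inl v) u \<le> r)} \<union>
     {Inr w | w. w \<in> cosets G P \<and> (\<forall>u\<in>U. dS G S (Inr w) u \<le> r + \<epsilon>)}"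

definition convex_wrt :: "('a, 'b) monoid_scheme \<Rightarrow> 'a set set \<Rightarrow> 'a set \<Rightarrow> nat \<Rightarrow> nat
     \<Rightarrow> ('a + 'a set) set \<Rightarrow> ('a + 'a set) \<Rightarrow> bool" where
  "convex_wrt G P S \<epsilon> \<nu> U' u \<longleftrightarrow> u \<in> U' \<and>
     (\<forall>u'\<in>U'. \<forall>p. geod_from_to G S u u' p \<longrightarrow>
        (\<forall>j. j + \<nu> \<le> dS G S u u' \<longrightarrow>
           Inl (p j) \<in> U' \<and>
           (\<forall>w\<in>cosets G P. dS G S (Inr w) (Inl (p j)) \<le> \<epsilon> \<longrightarrow> Inr w \<in> U')))"

end

theory Submission
  imports Defs
begin

text \<open>Let p be a geodesic from b \<in> U to u' in the hull and u \<in> U. For the triangle (b, u', u) it puts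
  p 0 within D of the start of a geodesic from b to u (of length at most \<mu>) or of the point at
  index |b,u'| on a geodesic from u' to u, so |p 0, u| \<le> D + max |b,u| (|u',u| - |b,u'|).
  Walking j \<le> |b,u'| - \<mu> - 2D steps along p therefore stays within r of u, since |b,u'| and
  |u',u| are at most r + \<epsilon> \<le> r + D; a coset \<epsilon>-close to p j is then within r + \<epsilon> of u.\<close>

definition reachable :: "('v \<Rightarrow> 'v \<Rightarrow> bool) \<Rightarrow> 'v \<Rightarrow> 'v \<Rightarrow> bool" where
  "reachable E x y \<longleftrightarrow> (\<exists>p n. p 0 = x \<and> p n = y \<and> is_path E p n)"

lemma reachable_refl: "reachable E x x"
  unfolding reachable_def is_path_def by (intro exI[of _ "\<lambda>_. x"] exI[of _ 0]) simp

lemma reachable_edge: "E x y \<Longrightarrow> reachable E x y"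
  unfolding reachable_def is_path_def
  by (intro exI[of _ "\<lambda>i. if i = 0 then x else y"] exI[of _ 1]) simp

lemma is_path_append:
  assumes "is_path E p m" "is_path E q n" "p m = q 0"
  shows "is_path E (\<lambda>i. if i \<le> m then p i else q (i - m)) (m + n)"
  unfolding is_path_def
proof (intro allI impI)
  fix j assume j: "j < m + n"
  consider "Suc j \<le> m" | "j = m" | "m < j" by linarith
  then show "E (if j \<le> m then p j else q (j - m)) (if Suc j \<le> m then p (Suc j) else q (Suc j - m))"
  proof cases
    case 3
    then have "Suc j - m = Suc (j - m)" "j - m < n" using j by auto
    with 3 assms(2) show ?thesis unfolding is_path_def by auto
  qed (use assms j in \<open>auto simp: is_path_def\<close>)
qed

lemma reachable_trans:
  assumes "reachable E x y" "reachable E y z"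
  shows "reachable E x z"
proof -
  obtain p m q n where "p 0 = x" "p m = y" "is_path E p m" "q 0 = y" "q n = z" "is_path E q n"
    using assms unfolding reachable_def by blast
  then show ?thesis unfolding reachable_def
    by (intro exI[of _ "\<lambda>i. if i \<le> m then p i else q (i - m)"] exI[of _ "m + n"])
      (use is_path_append[of E p m q n] in auto)
qed

lemma gdist_le: "p 0 = x \<Longrightarrow> p n = y \<Longrightarrow> is_path E p n \<Longrightarrow> gdist E x y \<le> n"
  unfolding gdist_def by (rule cInf_lower) auto

lemma reachable_gdist_path:
  assumes "reachable E x y"
  shows "\<exists>p. p 0 = x \<and> p (gdist E x y) = y \<and> is_path E p (gdist E x y)"
proof -
  have "gdist E x y \<in> {n. \<exists>p. p 0 = x \<and> p n = y \<and> is_path E p n}"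
    unfolding gdist_def by (rule Inf_nat_def1) (use assms in \<open>auto simp: reachable_def\<close>)
  then show ?thesis by blast
qed

lemma gdist_triangle:
  assumes "reachable E x y" "reachable E y z"
  shows "gdist E x z \<le> gdist E x y + gdist E y z"
proof -
  obtain p where p: "p 0 = x" "p (gdist E x y) = y" "is_path E p (gdist E x y)"
    using reachable_gdist_path[OF assms(1)] by blast
  obtain q where q: "q 0 = y" "q (gdist E y z) = z" "is_path E q (gdist E y z)"
    using reachable_gdist_path[OF assms(2)] by blast
  show ?thesis
    by (rule gdist_le[OF _ _ is_path_append[OF p(3) q(3)]]) (use p q in auto)
qed

lemma is_path_segment:
  "is_path E p n \<Longrightarrow> k \<le> n \<Longrightarrow> is_path E (\<lambda>t. p (i + t)) (k - i)"
  unfolding is_path_def by auto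

lemma gdist_path_points_le: "is_path E p n \<Longrightarrow> i \<le> k \<Longrightarrow> k \<le> n \<Longrightarrow> gdist E (p i) (p k) \<le> k - i"
  by (rule gdist_le[OF _ _ is_path_segment]) auto

lemma is_path_reverse:
  assumes "\<And>x y. E x y = E y x" "is_path E p n"
  shows "is_path E (\<lambda>t. p (n - t)) n"
  unfolding is_path_def
proof (intro allI impI)
  fix j assume "j < n"
  then have "E (p (n - Suc j)) (p (Suc (n - Suc j)))" "Suc (n - Suc j) = n - j"
    using assms(2) unfolding is_path_def by auto
  then show "E (p (n - j)) (p (n - Suc j))" using assms(1) by metis
qed

lemma gdist_sym:
  assumes "\<And>x y. E x y = E y x"
  shows "gdist E x y = gdist E y x"
proof -
  have "\<exists>q. q 0 = b \<and> q n = a \<and> is_path E q n" if "p 0 = a" "p n = b" "is_path E p n" for a b p n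
    using is_path_reverse[OF assms that(3)] that by (intro exI[of _ "\<lambda>t. p (n - t)"]) auto
  then have "{n. \<exists>p. p 0 = x \<and> p n = y \<and> is_path E p n} = {n. \<exists>p. p 0 = y \<and> p n = x \<and> is_path E p n}"
    by blast
  then show ?thesis unfolding gdist_def by simp
qed

lemma cay_adj_sym: "cay_adj G S x y = cay_adj G S y x"
  unfolding cay_adj_def by blast

lemma cay_path_in_carrier:
  assumes "p 0 \<in> carrier G" "is_path (cay_adj G S) p n" "i \<le> n"
  shows "p i \<in> carrier G"
proof (cases i)
  case (Suc k)
  then show ?thesis using assms unfolding is_path_def cay_adj_def by auto
qed (use assms in simp)

locale cayley_graph = group G for G :: "('a, 'b) monoid_scheme" (structure) +
  fixes S :: "'a set"
  assumes gens_subset: "S \<subseteq> carrier G"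
    and generate_eq: "generate G S = carrier G"
begin

lemma reachable_mult_generate:
  assumes "h \<in> generate G S" "x \<in> carrier G"
  shows "reachable (cay_adj G S) x (x \<otimes> h)"
  using assms
proof (induction arbitrary: x)
  case one
  then show ?case by (simp add: reachable_refl)
next
  case (incl s)
  then show ?case using gens_subset by (auto simp: cay_adj_def intro!: reachable_edge)
next
  case (inv s)
  then have s: "s \<in> carrier G" using gens_subset by auto
  then have "x = (x \<otimes> inv s) \<otimes> s" using inv.prems by (simp add: m_assoc)
  then show ?case using inv s by (auto simp: cay_adj_def intro!: reachable_edge)
next
  case (eng h1 h2)
  then have h: "h1 \<in> carrier G" "h2 \<in> carrier G" using generate_incl gens_subset by blast+
  have "reachable (cay_adj G S) (x \<otimes> h1) ((x \<otimes> h1) \<otimes> h2)"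
    using eng.IH(2) eng.prems h by simp
  then show ?case using eng.IH(1)[OF eng.prems] h eng.prems
    by (simp add: m_assoc reachable_trans)
qed

lemma cay_reachable: "x \<in> carrier G \<Longrightarrow> y \<in> carrier G \<Longrightarrow> reachable (cay_adj G S) x y"
  using reachable_mult_generate[of "inv x \<otimes> y" x] generate_eq by (simp add: m_assoc[symmetric])

lemma cay_gdist_triangle:
  "x \<in> carrier G \<Longrightarrow> y \<in> carrier G \<Longrightarrow> z \<in> carrier G \<Longrightarrow>
    gdist (cay_adj G S) x z \<le> gdist (cay_adj G S) x y + gdist (cay_adj G S) y z"
  by (simp add: cay_reachable gdist_triangle)

end

lemma dS_le: "a \<in> toset x \<Longrightarrow> c \<in> toset y \<Longrightarrow> dS G S x y \<le> gdist (cay_adj G S) a c"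
  unfolding dS_def by (rule cInf_lower) auto

lemma dS_attained:
  assumes "toset x \<noteq> {}" "toset y \<noteq> {}"
  shows "\<exists>a\<in>toset x. \<exists>c\<in>toset y. dS G S x y = gdist (cay_adj G S) a c"
proof -
  have "{gdist (cay_adj G S) a c |a c. a \<in> toset x \<and> c \<in> toset y} \<noteq> {}" using assms by blast
  from Inf_nat_def1[OF this] show ?thesis unfolding dS_def by blast
qed

lemma dS_sym: "dS G S x y = dS G S y x"
proof -
  have "{gdist (cay_adj G S) a c |a c. a \<in> toset x \<and> c \<in> toset y} =
        {gdist (cay_adj G S) a c |a c. a \<in> toset y \<and> c \<in> toset x}"
    using gdist_sym[of "cay_adj G S", OF cay_adj_sym] by blast
  then show ?thesis unfolding dS_def by simp
qed

lemma dS_Inl_Inl: "dS G S (Inl a) (Inl c) = gdist (cay_adj G S) a c"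
  unfolding dS_def by simp

lemma dS_self: "a \<in> toset x \<Longrightarrow> dS G S x x = 0"
  using dS_le[of a x a x G S] gdist_le[of "\<lambda>_. a" a 0] by (simp add: is_path_def)

lemma dS_path_points_le:
  "is_path (cay_adj G S) p n \<Longrightarrow> i \<le> k \<Longrightarrow> k \<le> n \<Longrightarrow> dS G S (Inl (p i)) (Inl (p k)) \<le> k - i"
  by (simp add: dS_Inl_Inl gdist_path_points_le)

lemma geod_from_to_dS_end_le:
  assumes "geod_from_to G S x y q" "m \<le> dS G S x y"
  shows "dS G S (Inl (q m)) y \<le> dS G S x y - m"
proof -
  let ?n = "dS G S x y"
  have "dS G S (Inl (q m)) y \<le> gdist (cay_adj G S) (q m) (q ?n)"
    using assms(1) by (intro dS_le) (auto simp: geod_from_to_def)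
  also have "\<dots> \<le> ?n - m"
    using assms by (intro gdist_path_points_le) (auto simp: geod_from_to_def)
  finally show ?thesis .
qed

context cayley_graph
begin

lemma dS_triangle_Inl:
  assumes "toset x \<noteq> {}" "toset x \<subseteq> carrier G" "toset z \<noteq> {}" "toset z \<subseteq> carrier G"
    and "v \<in> carrier G"
  shows "dS G S x z \<le> dS G S x (Inl v) + dS G S (Inl v) z"
proof -
  obtain a where a: "a \<in> toset x" "dS G S x (Inl v) = gdist (cay_adj G S) a v"
    using dS_attained[of x "Inl v" G S] assms(1) by auto
  obtain c where c: "c \<in> toset z" "dS G S (Inl v) z = gdist (cay_adj G S) v c"
    using dS_attained[of "Inl v" z G S] assms(3) by auto
  have "dS G S x z \<le> gdist (cay_adj G S) a c" using a c by (intro dS_le)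
  also have "\<dots> \<le> gdist (cay_adj G S) a v + gdist (cay_adj G S) v c"
    using a c assms by (intro cay_gdist_triangle) auto
  finally show ?thesis using a c by simp
qed

lemma geod_from_to_exists:
  assumes "toset x \<noteq> {}" "toset x \<subseteq> carrier G" "toset y \<noteq> {}" "toset y \<subseteq> carrier G"
  shows "\<exists>p. geod_from_to G S x y p"
proof -
  obtain a c where ac: "a \<in> toset x" "c \<in> toset y" "dS G S x y = gdist (cay_adj G S) a c"
    using dS_attained[OF assms(1,3)] by blast
  then obtain q where "q 0 = a" "q (dS G S x y) = c" "is_path (cay_adj G S) q (dS G S x y)"
    using reachable_gdist_path[OF cay_reachable, of a c] assms by auto
  then show ?thesis unfolding geod_from_to_def using ac by metis
qed

end

locale coned_cayley_graph = cayley_graph +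
  fixes P :: "'a set set"
  assumes subgroups: "H \<in> P \<Longrightarrow> subgroup H G"
begin

lemma toset_VW:
  assumes "x \<in> VW G P"
  shows "toset x \<noteq> {}" "toset x \<subseteq> carrier G"
proof -
  have "toset x \<noteq> {} \<and> toset x \<subseteq> carrier G"
  proof (cases x)
    case (Inr w)
    then obtain g H where w: "w = g <# H" "g \<in> carrier G" "H \<in> P"
      using assms unfolding VW_def cosets_def by auto
    then have H: "subgroup H G" by (simp add: subgroups)
    then have "g \<otimes> \<one> \<in> w" unfolding w(1) l_coset_def by (blast intro: subgroup.one_closed)
    then have "g \<in> w" using w(2) by simp
    moreover have "w \<subseteq> carrier G" unfolding w(1) by (rule l_coset_subset_G[OF subgroup.subset[OF H] w(2)])
    ultimately show ?thesis using Inr by auto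
  qed (use assms in \<open>auto simp: VW_def\<close>)
  then show "toset x \<noteq> {}" "toset x \<subseteq> carrier G" by auto
qed

lemma dS_triangle_VW:
  assumes "x \<in> VW G P" "z \<in> VW G P" "v \<in> carrier G"
  shows "dS G S x z \<le> dS G S x (Inl v) + dS G S (Inl v) z"
  using dS_triangle_Inl[OF toset_VW[OF assms(1)] toset_VW[OF assms(2)] assms(3)] .

lemma geod_from_to_exists_VW:
  assumes "x \<in> VW G P" "y \<in> VW G P"
  shows "\<exists>p. geod_from_to G S x y p"
  using geod_from_to_exists[OF toset_VW[OF assms(1)] toset_VW[OF assms(2)]] .

end

lemma thin_triangle_at_start:
  assumes "thin_triangle_constants G P S \<epsilon> R D"
    and "a \<in> VW G P" "b \<in> VW G P" "c \<in> VW G P" "a \<noteq> b"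
    and "geod_from_to G S a b pab" "geod_from_to G S b c pbc" "geod_from_to G S a c pac"
  shows "dS G S (Inl (pab 0)) (Inl (pac 0)) \<le> D \<or>
         dS G S (Inl (pab 0)) (Inl (pbc (min (dS G S a b) (dS G S b c)))) \<le> D"
proof -
  note triangle_condition = assms(1)[unfolded thin_triangle_constants_def,
      THEN conjunct2, THEN conjunct2, THEN conjunct2, THEN conjunct2, THEN conjunct2]
  \<comment> \<open>Since R > 0, the initial vertex is deep in no coset, so z is p 0 itself.\<close>
  have "\<not> deep G S \<epsilon> R pab (dS G S a b) 0 w" for w
    using assms(1) by (simp add: thin_triangle_constants_def deep_def)
  with triangle_condition[rule_format, OF assms(2-4) conjI[OF assms(5) conjI[OF assms(6) conjI[OF assms(7,8)]]] le0,
      of "Inl (pab 0)"]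
  show ?thesis by (simp add: pt_def)
qed

context coned_cayley_graph
begin

lemma geod_start_dS_le:
  assumes ttc: "thin_triangle_constants G P S \<epsilon> R D"
    and VW: "b \<in> VW G P" "u' \<in> VW G P" "u \<in> VW G P" and "b \<noteq> u'"
    and p: "geod_from_to G S b u' p"
  shows "dS G S (Inl (p 0)) u \<le> D + max (dS G S b u) (dS G S u' u - dS G S b u')"
proof -
  obtain pbc where pbc: "geod_from_to G S u' u pbc" using geod_from_to_exists_VW VW by blast
  obtain pac where pac: "geod_from_to G S b u pac" using geod_from_to_exists_VW VW by blast
  have "p 0 \<in> carrier G" using p toset_VW(2)[OF VW(1)] by (auto simp: geod_from_to_def)
  then have triangle: "dS G S (Inl (p 0)) u \<le> dS G S (Inl (p 0)) (Inl v) + dS G S (Inl v) u"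
    if "v \<in> carrier G" for v
    using dS_triangle_VW[of "Inl (p 0)" u v] VW(3) that unfolding VW_def by blast
  consider "dS G S (Inl (p 0)) (Inl (pac 0)) \<le> D"
    | "dS G S (Inl (p 0)) (Inl (pbc (min (dS G S b u') (dS G S u' u)))) \<le> D"
    using thin_triangle_at_start[OF ttc VW \<open>b \<noteq> u'\<close> p pbc pac] by blast
  then show ?thesis
  proof cases
    case 1
    have "pac 0 \<in> carrier G" using pac toset_VW(2)[OF VW(1)] by (auto simp: geod_from_to_def)
    then have "dS G S (Inl (p 0)) u \<le> D + dS G S (Inl (pac 0)) u" using 1 triangle[of "pac 0"] by linarith
    also have "\<dots> \<le> D + dS G S b u" using geod_from_to_dS_end_le[OF pac, of 0] by simp
    finally show ?thesis by simp
  next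
    case 2
    let ?m = "min (dS G S b u') (dS G S u' u)"
    have "pbc 0 \<in> carrier G" "is_path (cay_adj G S) pbc (dS G S u' u)"
      using pbc toset_VW(2)[OF VW(2)] by (auto simp: geod_from_to_def)
    then have "pbc ?m \<in> carrier G" by (rule cay_path_in_carrier) simp
    then have "dS G S (Inl (p 0)) u \<le> D + dS G S (Inl (pbc ?m)) u" using 2 triangle[of "pbc ?m"] by linarith
    also have "\<dots> \<le> D + (dS G S u' u - ?m)" using geod_from_to_dS_end_le[OF pbc, of ?m] by simp
    finally show ?thesis by simp
  qed
qed

end

lemma r_hull_subset_VW: "r_hull G P S \<epsilon> U r \<subseteq> VW G P"
  unfolding r_hull_def VW_def by auto

lemma r_hull_dS_le: "x \<in> r_hull G P S \<epsilon> U r \<Longrightarrow> u \<in> U \<Longrightarrow> dS G S x u \<le> r + \<epsilon>"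
  unfolding r_hull_def by force

lemma Inl_mem_r_hullI:
  "v \<in> carrier G \<Longrightarrow> (\<And>u. u \<in> U \<Longrightarrow> dS G S (Inl v) u \<le> r) \<Longrightarrow> Inl v \<in> r_hull G P S \<epsilon> U r"
  unfolding r_hull_def by blast

lemma Inr_mem_r_hullI:
  "w \<in> cosets G P \<Longrightarrow> (\<And>u. u \<in> U \<Longrightarrow> dS G S (Inr w) u \<le> r + \<epsilon>) \<Longrightarrow> Inr w \<in> r_hull G P S \<epsilon> U r"
  unfolding r_hull_def by blast

lemma mem_r_hull_if_diameter_le:
  assumes "U \<subseteq> VW G P" "\<forall>u\<in>U. \<forall>u'\<in>U. dS G S u u' \<le> \<mu>" "\<mu> \<le> r" "b \<in> U"
  shows "b \<in> r_hull G P S \<epsilon> U r"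
proof -
  have "dS G S b u \<le> r" if "u \<in> U" for u using assms that by fastforce
  with assms(1,4) show ?thesis unfolding r_hull_def VW_def by (force intro: trans_le_add1)
qed

context coned_cayley_graph
begin

lemma geod_point_mem_r_hull:
  assumes ttc: "thin_triangle_constants G P S \<epsilon> R D"
    and U: "U \<subseteq> VW G P" "\<forall>u\<in>U. \<forall>u'\<in>U. dS G S u u' \<le> \<mu>"
    and b: "b \<in> U" and u': "u' \<in> r_hull G P S \<epsilon> U r"
    and p: "geod_from_to G S b u' p" and j: "j + (\<mu> + 2 * D) \<le> dS G S b u'"
  shows "Inl (p j) \<in> r_hull G P S \<epsilon> U r"
proof (rule Inl_mem_r_hullI)
  have D: "0 < D" "\<epsilon> \<le> D" using ttc by (auto simp: thin_triangle_constants_def)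
  have VW: "b \<in> VW G P" "u' \<in> VW G P" using U b u' r_hull_subset_VW by blast+
  have path: "p 0 \<in> carrier G" "is_path (cay_adj G S) p (dS G S b u')"
    using p toset_VW(2)[OF VW(1)] by (auto simp: geod_from_to_def)
  show pj: "p j \<in> carrier G" using cay_path_in_carrier[OF path] j by simp
  have "b \<noteq> u'"
  proof
    assume "b = u'"
    then have "dS G S b u' = 0" using p dS_self[of "p 0" b G S] by (simp add: geod_from_to_def)
    then show False using j D by simp
  qed
  fix u assume u: "u \<in> U"
  have uVW: "u \<in> VW G P" using u U by blast
  have pjVW: "Inl (p j) \<in> VW G P" using pj unfolding VW_def by blast
  have start: "dS G S (Inl (p 0)) u \<le> D + max (dS G S b u) (dS G S u' u - dS G S b u')"
    using geod_start_dS_le[OF ttc VW uVW \<open>b \<noteq> u'\<close> p] .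
  have "dS G S (Inl (p j)) (Inl (p 0)) \<le> j"
    using dS_path_points_le[OF path(2), of 0 j] dS_sym[of G S "Inl (p j)"] j by simp
  moreover have "dS G S (Inl (p j)) u \<le> dS G S (Inl (p j)) (Inl (p 0)) + dS G S (Inl (p 0)) u"
    using dS_triangle_VW[OF pjVW uVW path(1)] .
  ultimately have "dS G S (Inl (p j)) u \<le> j + (D + max (dS G S b u) (dS G S u' u - dS G S b u'))"
    using start by linarith
  also have "\<dots> \<le> r"
  proof -
    have "dS G S b u \<le> \<mu>" using U(2) b u by blast
    moreover have "dS G S b u' \<le> r + \<epsilon>" using r_hull_dS_le[OF u' b] dS_sym[of G S b u'] by simp
    moreover have "dS G S u' u \<le> r + \<epsilon>" using r_hull_dS_le[OF u' u] .
    ultimately have "j + (D + dS G S b u) \<le> r" "j + (D + (dS G S u' u - dS G S b u')) \<le> r"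
      using j D by linarith+
    then show ?thesis by simp
  qed
  finally show "dS G S (Inl (p j)) u \<le> r" .
qed

lemma coset_mem_r_hull_if_near:
  assumes U: "U \<subseteq> VW G P" and w: "w \<in> cosets G P"
    and v: "Inl v \<in> r_hull G P S \<epsilon> U r" and near: "dS G S (Inr w) (Inl v) \<le> \<epsilon>"
  shows "Inr w \<in> r_hull G P S \<epsilon> U r"
proof (rule Inr_mem_r_hullI[OF w])
  fix u assume u: "u \<in> U"
  have "v \<in> carrier G" "dS G S (Inl v) u \<le> r" using v u unfolding r_hull_def by blast+
  moreover have "Inr w \<in> VW G P" using w unfolding VW_def by blast
  ultimately have "dS G S (Inr w) u \<le> dS G S (Inr w) (Inl v) + r"
    using dS_triangle_VW[of "Inr w" u v] U u by fastforce
  then show "dS G S (Inr w) u \<le> r + \<epsilon>" using near by linarith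
qed

end

theorem lemma3p10:
  fixes G :: "('a, 'b) monoid_scheme" and P :: "'a set set" and S :: "'a set"
    and \<epsilon> R D \<mu> r :: nat and U :: "('a + 'a set) set"
  assumes "group G"
    and "S \<subseteq> carrier G" and "finite S" and "generate G S = carrier G"
    and "rel_hyperbolic G P S"
    and "thin_triangle_constants G P S \<epsilon> R D"
    and "0 < \<mu>"
    and "finite U" and "U \<subseteq> VW G P"
    and "\<forall>u\<in>U. \<forall>u'\<in>U. dS G S u u' \<le> \<mu>"
    and "\<mu> \<le> r"
  shows "\<forall>b\<in>U. convex_wrt G P S \<epsilon> (\<mu> + 2 * D) (r_hull G P S \<epsilon> U r) b"
proof
  fix b assume b: "b \<in> U"
  interpret coned_cayley_graph G S P
    using assms(1,2,4,5)
    by (intro coned_cayley_graph.intro cayley_graph.intro cayley_graph_axioms.intro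
        coned_cayley_graph_axioms.intro) (auto simp: rel_hyperbolic_def)
  show "convex_wrt G P S \<epsilon> (\<mu> + 2 * D) (r_hull G P S \<epsilon> U r) b"
    unfolding convex_wrt_def
  proof (intro conjI ballI allI impI)
    show "b \<in> r_hull G P S \<epsilon> U r" by (rule mem_r_hull_if_diameter_le[OF assms(9-11) b])
    fix u' p j
    assume "u' \<in> r_hull G P S \<epsilon> U r" "geod_from_to G S b u' p" "j + (\<mu> + 2 * D) \<le> dS G S b u'"
    then show pj: "Inl (p j) \<in> r_hull G P S \<epsilon> U r"
      by (rule geod_point_mem_r_hull[OF assms(6,9,10) b])
    fix w assume "w \<in> cosets G P" "dS G S (Inr w) (Inl (p j)) \<le> \<epsilon>"
    then show "Inr w \<in> r_hull G P S \<epsilon> U r" by (rule coset_mem_r_hull_if_near[OF assms(9) _ pj])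
  qed
qed

end
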